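(* Let $\mathcal{M}$ be a finite $\mathcal{R}$-trivial monoid with generating set $\mathcal{S}$, let $R$ be a ring with $1\neq 0$, and let $\sigma\in\mathcal{M}$. Let $$T_{[\sigma]}:=\prod_{\tau\in\mathcal{L}^{\mathcal{S}}_\sigma} U_\tau\prod_{\kappa\in\mathcal{S}\setminus\mathcal{L}^{\mathcal{S}}_\sigma}(\mathrm{Id}-U_\kappa)\in\mathrm{Mat}(R,n),$$ with the factors multiplied in any order. Then for every $\mu\in\mathcal{M}$, $(T_{[\sigma]})_{\mu,\mu}=1$ if $\mu\sim\sigma$ and $(T_{[\sigma]})_{\mu,\mu}=0$ otherwise; this holds independently of the order of the factors.
   Context: $\mathcal{M}$ is $\mathcal{R}$-trivial: $\sigma\mathcal{M}=\tau\mathcal{M}$ implies $\sigma=\tau$; $n=\#\mathcal{M}$, and its elements are ordered so that $\#\sigma_1\mathcal{M}\ge\dots\ge\#\sigma_n\mathcal{M}$, with matrix entries indexed by elements of $\mathcal{M}$. $U_\sigma$ is the matrix with $(U_\sigma)_{\tau,\kappa}=1$ if $\tau\sigma=\kappa$ and $0$ otherwise. $\mathcal{L}_\sigma:=\{\tau\in\mathcal{M}:\sigma\tau=\sigma\}$, $\mathcal{L}^{\mathcal{S}}_\sigma:=\mathcal{L}_\sigma\cap\mathcal{S}$, and $\mu\sim\sigma$ (same loop-type) iff $\mathcal{L}_\mu=\mathcal{L}_\sigma$. *)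

theory Defs
  imports "HOL-Analysis.Analysis"
begin

text \<open>The monoid M is the finite type 'm of class monoid_mult; matrices over the
ring 'r are indexed by elements of 'm, i.e. of type 'r ^ 'm ^ 'm
(entry (tau, kappa) is A $ tau $ kappa).\<close>

definition R_trivial :: "('m::monoid_mult) itself \<Rightarrow> bool" where
  "R_trivial _ \<longleftrightarrow> (\<forall>\<sigma> \<tau> :: 'm::monoid_mult. (\<lambda>x. \<sigma> * x) ` UNIV = (\<lambda>x. \<tau> * x) ` UNIV \<longrightarrow> \<sigma> = \<tau>)"

inductive_set generated_monoid :: "('m::monoid_mult) set \<Rightarrow> 'm set" for S where
  one: "1 \<in> generated_monoid S"
| step: "x \<in> generated_monoid S \<Longrightarrow> s \<in> S \<Longrightarrow> x * s \<in> generated_monoid S"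

definition generates :: "('m::monoid_mult) set \<Rightarrow> bool" where
  "generates S \<longleftrightarrow> generated_monoid S = UNIV"

definition U_mat :: "('m::{monoid_mult,finite}) \<Rightarrow> (('r::ring_1, 'm) vec, 'm) vec" where
  "U_mat \<sigma> = (\<chi> \<tau> \<kappa>. if \<tau> * \<sigma> = \<kappa> then 1 else 0)"

definition loops :: "('m::monoid_mult) \<Rightarrow> 'm set" where
  "loops \<sigma> = {\<tau>. \<sigma> * \<tau> = \<sigma>}"

definition same_loop_type :: "('m::monoid_mult) \<Rightarrow> 'm \<Rightarrow> bool" where
  "same_loop_type \<mu> \<sigma> \<longleftrightarrow> loops \<mu> = loops \<sigma>"

definition T_factor :: "('m::{monoid_mult,finite}) set \<Rightarrow> 'm \<Rightarrow> 'm \<Rightarrow> (('r::ring_1, 'm) vec, 'm) vec" where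
  "T_factor S \<sigma> \<kappa> = (if \<kappa> \<in> loops \<sigma> \<inter> S then U_mat \<kappa> else mat 1 - U_mat \<kappa>)"

definition T_prod :: "('m::{monoid_mult,finite}) set \<Rightarrow> 'm \<Rightarrow> 'm list \<Rightarrow> (('r::ring_1, 'm) vec, 'm) vec" where
  "T_prod S \<sigma> ks = foldr (\<lambda>\<kappa> A. T_factor S \<sigma> \<kappa> ** A) ks (mat 1)"

end

theory Submission
  imports Defs
begin

text \<open>In an \<open>\<R>\<close>-trivial monoid the relation ``\<open>\<kappa> \<in> \<tau> \<cdot> \<M>\<close>'' is a partial order, and all
  matrices \<open>U\<^sub>\<kappa>\<close> and \<open>Id - U\<^sub>\<kappa>\<close> are triangular with respect to it. Hence the diagonal of their
  product is the product of their diagonals: the \<open>\<mu>\<close>-th diagonal entry of the factor for \<open>\<kappa>\<close>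
  is \<open>1\<close> iff \<open>\<kappa>\<close> is a loop at \<open>\<mu>\<close> exactly when it is one at \<open>\<sigma>\<close>. Since loops at \<open>\<mu>\<close> form a
  submonoid closed under factors (again by \<open>\<R>\<close>-triviality), agreeing on the generators means
  \<open>\<L>\<^sub>\<mu> = \<L>\<^sub>\<sigma>\<close>.\<close>

lemma R_trivial_antisym:
  assumes "R_trivial TYPE('m::monoid_mult)" and "(\<nu>::'m) = \<mu> * a" and "\<mu> = \<nu> * b"
  shows "\<nu> = \<mu>"
proof -
  have "(\<lambda>x. \<nu> * x) ` UNIV = (\<lambda>x. \<mu> * x) ` UNIV"
  proof (intro equalityI subsetI)
    fix z assume "z \<in> (\<lambda>x. \<nu> * x) ` UNIV"
    then obtain x where "z = \<mu> * (a * x)" using assms(2) by (auto simp: mult.assoc)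
    thus "z \<in> (\<lambda>x. \<mu> * x) ` UNIV" by auto
  next
    fix z assume "z \<in> (\<lambda>x. \<mu> * x) ` UNIV"
    then obtain x where "z = \<nu> * (b * x)" using assms(3) by (auto simp: mult.assoc)
    thus "z \<in> (\<lambda>x. \<nu> * x) ` UNIV" by auto
  qed
  thus ?thesis using assms(1) unfolding R_trivial_def by blast
qed

lemma R_trivial_loop_mult_iff:
  assumes "R_trivial TYPE('m::monoid_mult)"
  shows "(\<nu>::'m) * (x * y) = \<nu> \<longleftrightarrow> \<nu> * x = \<nu> \<and> \<nu> * y = \<nu>"
proof
  assume loop: "\<nu> * (x * y) = \<nu>"
  then have "\<nu> * x = \<nu>"
    using R_trivial_antisym[OF assms, of "\<nu> * x" \<nu> x y] by (simp add: mult.assoc)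
  with loop show "\<nu> * x = \<nu> \<and> \<nu> * y = \<nu>" by (metis mult.assoc)
qed (metis mult.assoc)

lemma R_trivial_same_loop_type_iff_generators:
  assumes "R_trivial TYPE('m::monoid_mult)" and "generates S"
  shows "same_loop_type (\<mu>::'m) \<sigma> \<longleftrightarrow> loops \<mu> \<inter> S = loops \<sigma> \<inter> S"
proof
  assume gens: "loops \<mu> \<inter> S = loops \<sigma> \<inter> S"
  have "\<mu> * x = \<mu> \<longleftrightarrow> \<sigma> * x = \<sigma>" if "x \<in> generated_monoid S" for x
    using that
  proof induction
    case (step x s)
    with gens show ?case
      by (auto simp: R_trivial_loop_mult_iff[OF assms(1)] loops_def)
  qed simp
  with assms(2) show "same_loop_type \<mu> \<sigma>"
    by (auto simp: generates_def same_loop_type_def loops_def)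
qed (simp add: same_loop_type_def)

definition R_triangular :: "(('r::ring_1, 'm::{monoid_mult,finite}) vec, 'm) vec \<Rightarrow> bool" where
  "R_triangular A \<longleftrightarrow> (\<forall>\<tau> \<kappa>. A $ \<tau> $ \<kappa> \<noteq> 0 \<longrightarrow> (\<exists>w. \<kappa> = \<tau> * w))"

lemma R_triangular_mat_1: "R_triangular (mat 1)"
  unfolding R_triangular_def by (auto simp: mat_def intro: exI[of _ 1])

lemma R_triangular_U_mat: "R_triangular (U_mat \<kappa>)"
  unfolding R_triangular_def U_mat_def by auto

lemma R_triangular_diff:
  assumes "R_triangular A" "R_triangular B"
  shows "R_triangular (A - B)"
  using assms unfolding R_triangular_def by (metis diff_zero diff_self vector_minus_component)

lemma R_triangular_mult:
  assumes "R_triangular A" "R_triangular B"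
  shows "R_triangular (A ** B)"
  unfolding R_triangular_def
proof (intro allI impI)
  fix \<tau> \<kappa>
  assume "(A ** B) $ \<tau> $ \<kappa> \<noteq> 0"
  then obtain \<nu> where "A $ \<tau> $ \<nu> * B $ \<nu> $ \<kappa> \<noteq> 0"
    by (metis (no_types, lifting) matrix_matrix_mult_def sum.neutral vec_lambda_beta)
  then have "A $ \<tau> $ \<nu> \<noteq> 0" "B $ \<nu> $ \<kappa> \<noteq> 0" by auto
  then obtain a b where "\<nu> = \<tau> * a" "\<kappa> = \<nu> * b"
    using assms unfolding R_triangular_def by blast
  then show "\<exists>w. \<kappa> = \<tau> * w" by (metis mult.assoc)
qed

lemma R_triangular_mult_diag:
  assumes "R_trivial TYPE('m)" and A: "R_triangular A" and B: "R_triangular B"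
  shows "(A ** B) $ \<mu> $ \<mu> = A $ \<mu> $ \<mu> * B $ \<mu> $ (\<mu>::'m::{monoid_mult,finite})"
proof -
  have "A $ \<mu> $ \<nu> * B $ \<nu> $ \<mu> = 0" if "\<nu> \<noteq> \<mu>" for \<nu>
  proof (rule ccontr)
    assume "A $ \<mu> $ \<nu> * B $ \<nu> $ \<mu> \<noteq> 0"
    then obtain a b where "\<nu> = \<mu> * a" "\<mu> = \<nu> * b"
      using A B unfolding R_triangular_def by (metis mult_zero_left mult_zero_right)
    with that show False using R_trivial_antisym[OF assms(1)] by blast
  qed
  then have "(\<Sum>\<nu>\<in>UNIV - {\<mu>}. A $ \<mu> $ \<nu> * B $ \<nu> $ \<mu>) = 0" by simp
  then show ?thesis by (simp add: matrix_matrix_mult_def sum.remove[of UNIV \<mu>])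
qed

lemma R_triangular_T_factor: "R_triangular (T_factor S \<sigma> \<kappa>)"
  by (simp add: T_factor_def R_triangular_U_mat R_triangular_diff R_triangular_mat_1)

lemma T_factor_diag:
  "T_factor S \<sigma> \<kappa> $ \<mu> $ \<mu> = (if \<kappa> \<in> loops \<sigma> \<inter> S \<longleftrightarrow> \<kappa> \<in> loops \<mu> then 1 else 0)"
  by (simp add: T_factor_def U_mat_def mat_def loops_def)

lemma R_triangular_T_prod: "R_triangular (T_prod S \<sigma> ks)"
  by (induction ks) (simp_all add: T_prod_def R_triangular_mat_1 R_triangular_mult R_triangular_T_factor)

lemma T_prod_diag:
  assumes "R_trivial TYPE('m::{monoid_mult,finite})"
  shows "(T_prod S \<sigma> ks :: (('r::ring_1, 'm) vec, 'm) vec) $ \<mu> $ \<mu> =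
    (if \<forall>\<kappa>\<in>set ks. \<kappa> \<in> loops \<sigma> \<inter> S \<longleftrightarrow> \<kappa> \<in> loops \<mu> then 1 else 0)"
proof (induction ks)
  case Nil
  show ?case by (simp add: T_prod_def mat_def)
next
  case (Cons \<kappa> ks)
  have "(T_prod S \<sigma> (\<kappa> # ks) :: (('r, 'm) vec, 'm) vec) $ \<mu> $ \<mu> = (T_factor S \<sigma> \<kappa> ** T_prod S \<sigma> ks) $ \<mu> $ \<mu>"
    by (simp add: T_prod_def)
  also have "\<dots> = T_factor S \<sigma> \<kappa> $ \<mu> $ \<mu> * T_prod S \<sigma> ks $ \<mu> $ \<mu>"
    by (rule R_triangular_mult_diag[OF assms R_triangular_T_factor R_triangular_T_prod])
  also have "\<dots> = (if \<forall>\<kappa>'\<in>set (\<kappa> # ks). \<kappa>' \<in> loops \<sigma> \<inter> S \<longleftrightarrow> \<kappa>' \<in> loops \<mu> then 1 else 0)"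
    by (simp add: T_factor_diag Cons.IH)
  finally show ?case .
qed

theorem mainTheorem7:
  fixes S :: "('m::{monoid_mult,finite}) set" and \<sigma> :: 'm
  assumes "R_trivial TYPE('m)"
    and "generates S"
    and "(1::'r::ring_1) \<noteq> 0"
  shows "\<forall>ks \<mu>. distinct ks \<and> set ks = S \<longrightarrow>
           (T_prod S \<sigma> ks :: (('r, 'm) vec, 'm) vec) $ \<mu> $ \<mu> = (if same_loop_type \<mu> \<sigma> then 1 else 0)"
proof (intro allI impI)
  fix ks and \<mu> :: 'm
  assume "distinct ks \<and> set ks = S"
  then have "(\<forall>\<kappa>\<in>set ks. \<kappa> \<in> loops \<sigma> \<inter> S \<longleftrightarrow> \<kappa> \<in> loops \<mu>) \<longleftrightarrow> loops \<mu> \<inter> S = loops \<sigma> \<inter> S"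
    by blast
  then show "(T_prod S \<sigma> ks :: (('r, 'm) vec, 'm) vec) $ \<mu> $ \<mu> = (if same_loop_type \<mu> \<sigma> then 1 else 0)"
    by (simp add: T_prod_diag[OF assms(1)] R_trivial_same_loop_type_iff_generators[OF assms(1,2)])
qed

end
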